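(* Let $\kappa<-1$. Let $P_k,P_0\in\bar D$ and $b_k,b_0$ with $\kappa|P_k|<b_k<|P_k|$, $\kappa|P_0|<b_0<|P_0|$, such that $P_k\to P_0$ and $b_k\to b_0$ as $k\to\infty$. If $z_k\in\Gamma(P_k,b_k)$ and $z_k\to z_0$, then $z_0\in\Gamma(P_0,b_0)$, and the normals satisfy $\nu_k(z_k)\to\nu(z_0)$, where $\nu_k(z)=\frac{z}{|z|}-\kappa\frac{P_k-z}{|P_k-z|}$ is the normal to $\Gamma(P_k,b_k)$ at $z$ and $\nu(z)=\frac{z}{|z|}-\kappa\frac{P_0-z}{|P_0-z|}$ the normal to $\Gamma(P_0,b_0)$ at $z$.
   Context: $D\subset\mathbb R^n$ is contained in an $(n-1)$-dimensional hypersurface, with $\bar D$ compact and $0\notin\bar D$. For $P\ne0$ and $\kappa|P|<b<|P|$: $h(x,P,b)=\frac{(\kappa^2x\cdot P-b)-\sqrt{(\kappa^2x\cdot P-b)^2-(\kappa^2-1)(\kappa^2|P|^2-b^2)}}{\kappa^2-1}$, $I(P,b)=\frac{b+\sqrt{(\kappa^2-1)(\kappa^2|P|^2-b^2)}}{\kappa^2|P|}$, and the refracting oval is $\Gamma(P,b)=\{h(x,P,b)x:x\in S^{n-1},\ x\cdot P\ge I(P,b)|P|\}$; its points $z$ satisfy $|z|+\kappa|z-P|=b$. *)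

theory Defs
  imports "HOL-Analysis.Analysis"
begin

definition h_fun :: "real \<Rightarrow> 'a::euclidean_space \<Rightarrow> 'a \<Rightarrow> real \<Rightarrow> real" where
  "h_fun \<kappa> x P b =
     ((\<kappa>\<^sup>2 * (x \<bullet> P) - b)
       - sqrt ((\<kappa>\<^sup>2 * (x \<bullet> P) - b)\<^sup>2 - (\<kappa>\<^sup>2 - 1) * (\<kappa>\<^sup>2 * (norm P)\<^sup>2 - b\<^sup>2)))
     / (\<kappa>\<^sup>2 - 1)"

definition I_fun :: "real \<Rightarrow> 'a::euclidean_space \<Rightarrow> real \<Rightarrow> real" where
  "I_fun \<kappa> P b = (b + sqrt ((\<kappa>\<^sup>2 - 1) * (\<kappa>\<^sup>2 * (norm P)\<^sup>2 - b\<^sup>2))) / (\<kappa>\<^sup>2 * norm P)"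

definition oval :: "real \<Rightarrow> 'a::euclidean_space \<Rightarrow> real \<Rightarrow> 'a set" where
  "oval \<kappa> P b = {h_fun \<kappa> x P b *\<^sub>R x | x. x \<in> sphere 0 1 \<and> x \<bullet> P \<ge> I_fun \<kappa> P b * norm P}"

definition oval_normal :: "real \<Rightarrow> 'a::euclidean_space \<Rightarrow> 'a \<Rightarrow> 'a" where
  "oval_normal \<kappa> P z = (1 / norm z) *\<^sub>R z - \<kappa> *\<^sub>R ((1 / norm (P - z)) *\<^sub>R (P - z))"

end

theory Submission
  imports Defs
begin

text \<open>
  Every point of the oval \<open>\<Gamma>(P,b)\<close> satisfies the focal equation \<open>|z| + \<kappa>|z - P| = b\<close>; hence,
  because \<open>\<kappa>|P| < b < |P|\<close>, it is neither of the foci \<open>0\<close> and \<open>P\<close>. A limit of points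
  \<open>z\<^sub>k = h(x\<^sub>k, P\<^sub>k, b\<^sub>k) x\<^sub>k\<close> of ovals lies on the limit oval: by compactness of the sphere the
  directions \<open>x\<^sub>k\<close> converge along a subsequence, and \<open>h\<close> and \<open>I\<close> are continuous. Since \<open>z\<^sub>0\<close>
  avoids both foci, the normal map is continuous at \<open>(P\<^sub>0, z\<^sub>0)\<close>.
\<close>

lemma square_gt_one_if_less_minus_one:
  fixes \<kappa> :: real
  assumes "\<kappa> < -1"
  shows "1 < \<kappa>\<^sup>2"
proof -
  have "1 * 1 < (- \<kappa>) * (- \<kappa>)"
    using assms by (intro mult_strict_mono) auto
  then show ?thesis
    by (simp add: power2_eq_square)
qed

lemma focal_parameter_bounds:
  fixes \<kappa> b p :: real
  assumes \<kappa>: "\<kappa> < -1" and b_lower: "\<kappa> * p < b" and b_upper: "b < p"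
  shows "0 < p" and "b\<^sup>2 < \<kappa>\<^sup>2 * p\<^sup>2"
proof -
  have "0 < (1 - \<kappa>) * p"
    using b_lower b_upper by (simp add: algebra_simps)
  then show p: "0 < p"
    using \<kappa> by (simp add: zero_less_mult_iff)
  have "1 * p < - \<kappa> * p"
    using \<kappa> p by (intro mult_strict_right_mono) auto
  then have "\<bar>b\<bar> < - \<kappa> * p"
    using b_lower b_upper by (simp add: abs_less_iff)
  then have "\<bar>b\<bar>\<^sup>2 < (- \<kappa> * p)\<^sup>2"
    by (intro power_strict_mono) auto
  then show "b\<^sup>2 < \<kappa>\<^sup>2 * p\<^sup>2"
    by (simp add: power_mult_distrib)
qed

lemma smaller_quadratic_root:
  fixes e B C :: real
  assumes e: "0 < e" and C: "0 < C" and B: "sqrt (e * C) \<le> B"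
  defines "r \<equiv> (B - sqrt (B\<^sup>2 - e * C)) / e"
  shows "0 < r" and "e * r\<^sup>2 - 2 * B * r + C = 0"
    and "\<And>t. e * t \<le> B \<Longrightarrow> 0 \<le> e * t\<^sup>2 - 2 * B * t + C \<Longrightarrow> t \<le> r"
proof -
  have sqrt_eC: "0 < sqrt (e * C)"
    using e C by simp
  have discr: "0 \<le> B\<^sup>2 - e * C"
  proof -
    have "(sqrt (e * C))\<^sup>2 \<le> B\<^sup>2"
      using B sqrt_eC by (intro power_mono) auto
    then show ?thesis
      using e C by simp
  qed
  have "sqrt (B\<^sup>2 - e * C) < sqrt (B\<^sup>2)"
    using e C by (intro real_sqrt_less_mono) simp
  then show "0 < r"
    using B sqrt_eC e by (simp add: r_def)
  have "sqrt (B\<^sup>2 - e * C) = B - e * r"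
    using e by (simp add: r_def field_simps)
  then have "B\<^sup>2 - e * C = (B - e * r)\<^sup>2"
    using discr by (metis real_sqrt_pow2)
  then have "e * (e * r\<^sup>2 - 2 * B * r + C) = 0"
    by (simp add: algebra_simps power2_eq_square)
  then show "e * r\<^sup>2 - 2 * B * r + C = 0"
    using e by simp
  fix t
  assume vertex: "e * t \<le> B" and "0 \<le> e * t\<^sup>2 - 2 * B * t + C"
  then have "0 \<le> e * (e * t\<^sup>2 - 2 * B * t + C)"
    using e by simp
  also have "\<dots> = (B - e * t)\<^sup>2 - (B\<^sup>2 - e * C)"
    by (simp add: algebra_simps power2_eq_square)
  finally have "B\<^sup>2 - e * C \<le> (B - e * t)\<^sup>2"
    by simp
  moreover have "0 \<le> B - e * t"
    using vertex by simp
  ultimately have "sqrt (B\<^sup>2 - e * C) \<le> B - e * t"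
    by (intro real_le_lsqrt)
  then have "e * t \<le> e * r"
    using e by (simp add: r_def)
  then show "t \<le> r"
    using e by simp
qed

text \<open>Here \<open>s\<close> and \<open>p\<close> stand for \<open>x \<bullet> P\<close> and \<open>|P|\<close>, so \<open>s_lower\<close> is the condition
  \<open>x \<bullet> P \<ge> I(P,b) |P|\<close> and \<open>h = h(x,P,b)\<close>.\<close>
lemma oval_radius:
  fixes \<kappa> b p s :: real
  assumes \<kappa>: "\<kappa> < -1" and b_lower: "\<kappa> * p < b" and b_upper: "b < p"
    and s_upper: "s \<le> p"
    and s_lower: "(b + sqrt ((\<kappa>\<^sup>2 - 1) * (\<kappa>\<^sup>2 * p\<^sup>2 - b\<^sup>2))) / \<kappa>\<^sup>2 \<le> s"
  defines "h \<equiv> ((\<kappa>\<^sup>2 * s - b) - sqrt ((\<kappa>\<^sup>2 * s - b)\<^sup>2 - (\<kappa>\<^sup>2 - 1) * (\<kappa>\<^sup>2 * p\<^sup>2 - b\<^sup>2)))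
                / (\<kappa>\<^sup>2 - 1)"
  shows "0 < h" and "b \<le> h" and "\<kappa>\<^sup>2 * (h\<^sup>2 - 2 * h * s + p\<^sup>2) = (h - b)\<^sup>2"
proof -
  define e where "e = \<kappa>\<^sup>2 - 1"
  define B where "B = \<kappa>\<^sup>2 * s - b"
  define C where "C = \<kappa>\<^sup>2 * p\<^sup>2 - b\<^sup>2"
  have e: "0 < e"
    using square_gt_one_if_less_minus_one[OF \<kappa>] by (simp add: e_def)
  have C: "0 < C"
    using focal_parameter_bounds[OF \<kappa> b_lower b_upper] by (simp add: C_def)
  have "0 < \<kappa>\<^sup>2"
    using \<kappa> by simp
  then have "b + sqrt (e * C) \<le> \<kappa>\<^sup>2 * s"
    using s_lower by (simp add: e_def C_def pos_divide_le_eq mult.commute)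
  then have B: "sqrt (e * C) \<le> B"
    by (simp add: B_def)
  have h_eq: "h = (B - sqrt (B\<^sup>2 - e * C)) / e"
    by (simp add: h_def B_def C_def e_def)
  note root = smaller_quadratic_root[OF e C B, folded h_eq]
  show "0 < h"
    by (fact root(1))
  show "\<kappa>\<^sup>2 * (h\<^sup>2 - 2 * h * s + p\<^sup>2) = (h - b)\<^sup>2"
    using root(2) by (simp add: e_def B_def C_def algebra_simps power2_eq_square)
  show "b \<le> h"
  proof (cases "b \<le> 0")
    case True
    with \<open>0 < h\<close> show ?thesis by simp
  next
    case False
    have "e * C - (e * b)\<^sup>2 = e * \<kappa>\<^sup>2 * (p\<^sup>2 - b\<^sup>2)"
      by (simp add: e_def C_def algebra_simps power2_eq_square)
    moreover have "b\<^sup>2 \<le> p\<^sup>2"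
      using False b_upper by (intro power_mono) auto
    ultimately have "0 \<le> e * C - (e * b)\<^sup>2"
      using e by simp
    then have "(e * b)\<^sup>2 \<le> e * C"
      by simp
    then have "e * b \<le> sqrt (e * C)"
      by (rule real_le_rsqrt)
    then have "e * b \<le> B"
      using B by linarith
    moreover have "e * b\<^sup>2 - 2 * B * b + C = \<kappa>\<^sup>2 * ((p - b)\<^sup>2 + 2 * b * (p - s))"
      by (simp add: e_def B_def C_def algebra_simps power2_eq_square)
    moreover have "0 \<le> \<kappa>\<^sup>2 * ((p - b)\<^sup>2 + 2 * b * (p - s))"
      using False s_upper by simp
    ultimately show ?thesis
      by (intro root(3)) simp_all
  qed
qed

lemma oval_focal_property:
  fixes P z :: "'a::euclidean_space"
  assumes \<kappa>: "\<kappa> < -1" and "\<kappa> * norm P < b" and "b < norm P"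
    and z: "z \<in> oval \<kappa> P b"
  shows "norm z + \<kappa> * norm (z - P) = b"
proof -
  obtain x where x: "norm x = 1" and x_P: "I_fun \<kappa> P b * norm P \<le> x \<bullet> P"
    and z_eq: "z = h_fun \<kappa> x P b *\<^sub>R x"
    using z by (auto simp: oval_def)
  define h where "h = h_fun \<kappa> x P b"
  have "0 < norm P"
    using assms(2,3) by (cases "P = 0") auto
  moreover have "0 < \<kappa>\<^sup>2"
    using \<kappa> by simp
  ultimately have "I_fun \<kappa> P b * norm P
      = (b + sqrt ((\<kappa>\<^sup>2 - 1) * (\<kappa>\<^sup>2 * (norm P)\<^sup>2 - b\<^sup>2))) / \<kappa>\<^sup>2"
    by (simp add: I_fun_def field_simps)
  moreover have "x \<bullet> P \<le> norm P"
    using norm_cauchy_schwarz[of x P] x by simp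
  ultimately have h: "0 < h" "b \<le> h"
    and focal_sq: "\<kappa>\<^sup>2 * (h\<^sup>2 - 2 * h * (x \<bullet> P) + (norm P)\<^sup>2) = (h - b)\<^sup>2"
    using oval_radius[OF \<kappa> assms(2,3)] x_P unfolding h_def h_fun_def by simp_all
  have z_h: "z = h *\<^sub>R x"
    by (simp add: z_eq h_def)
  have norm_z: "norm z = h"
    using h x by (simp add: z_h)
  have "(norm (z - P))\<^sup>2 = (h *\<^sub>R x - P) \<bullet> (h *\<^sub>R x - P)"
    by (simp add: z_h power2_norm_eq_inner)
  also have "\<dots> = h\<^sup>2 * (x \<bullet> x) - 2 * h * (x \<bullet> P) + P \<bullet> P"
    by (simp add: inner_commute algebra_simps power2_eq_square)
  also have "\<dots> = h\<^sup>2 - 2 * h * (x \<bullet> P) + (norm P)\<^sup>2"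
    using x by (simp flip: power2_norm_eq_inner)
  finally have "(norm (z - P))\<^sup>2 = h\<^sup>2 - 2 * h * (x \<bullet> P) + (norm P)\<^sup>2" .
  with focal_sq have "(- \<kappa> * norm (z - P))\<^sup>2 = (h - b)\<^sup>2"
    by (simp add: power_mult_distrib)
  moreover have "0 \<le> - \<kappa> * norm (z - P)" and "0 \<le> h - b"
    using \<kappa> h by (auto simp: mult_nonpos_nonneg)
  ultimately have "- \<kappa> * norm (z - P) = h - b"
    using power2_eq_iff_nonneg by blast
  then show ?thesis
    using norm_z by simp
qed

lemma oval_limit:
  fixes P :: "nat \<Rightarrow> 'a::euclidean_space" and z :: "nat \<Rightarrow> 'a"
  assumes "\<kappa>\<^sup>2 \<noteq> 1" and "\<kappa> \<noteq> 0" and "P0 \<noteq> 0"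
    and P_lim: "P \<longlonglongrightarrow> P0" and b_lim: "b \<longlonglongrightarrow> b0"
    and z: "\<And>k. z k \<in> oval \<kappa> (P k) (b k)" and z_lim: "z \<longlonglongrightarrow> z0"
  shows "z0 \<in> oval \<kappa> P0 b0"
proof -
  obtain x where x: "\<And>k. x k \<in> sphere 0 1"
    and x_P: "\<And>k. I_fun \<kappa> (P k) (b k) * norm (P k) \<le> x k \<bullet> P k"
    and z_eq: "\<And>k. z k = h_fun \<kappa> (x k) (P k) (b k) *\<^sub>R x k"
    using z unfolding oval_def by (simp add: Setcompr_eq_image) metis
  obtain x0 r where x0: "x0 \<in> sphere 0 1" and r: "strict_mono r" and "(x \<circ> r) \<longlonglongrightarrow> x0"
    using compact_sphere[THEN compact_imp_seq_compact] x by (metis seq_compactE)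
  then have x_r: "(\<lambda>k. x (r k)) \<longlonglongrightarrow> x0"
    by (simp add: comp_def)
  have P_r: "(\<lambda>k. P (r k)) \<longlonglongrightarrow> P0" and b_r: "(\<lambda>k. b (r k)) \<longlonglongrightarrow> b0"
    using LIMSEQ_subseq_LIMSEQ[OF P_lim r] LIMSEQ_subseq_LIMSEQ[OF b_lim r]
    by (simp_all add: comp_def)
  have "(\<lambda>k. I_fun \<kappa> (P (r k)) (b (r k)) * norm (P (r k))) \<longlonglongrightarrow> I_fun \<kappa> P0 b0 * norm P0"
    using assms(2,3) unfolding I_fun_def by (intro tendsto_intros P_r b_r) simp
  moreover have "(\<lambda>k. x (r k) \<bullet> P (r k)) \<longlonglongrightarrow> x0 \<bullet> P0"
    by (intro tendsto_intros P_r x_r)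
  ultimately have x0_P0: "I_fun \<kappa> P0 b0 * norm P0 \<le> x0 \<bullet> P0"
    using x_P by (intro LIMSEQ_le) auto
  have "(\<lambda>k. z (r k)) \<longlonglongrightarrow> h_fun \<kappa> x0 P0 b0 *\<^sub>R x0"
    using assms(1) unfolding z_eq h_fun_def by (intro tendsto_intros P_r b_r x_r) simp
  moreover have "(\<lambda>k. z (r k)) \<longlonglongrightarrow> z0"
    using LIMSEQ_subseq_LIMSEQ[OF z_lim r] by (simp add: comp_def)
  ultimately have "z0 = h_fun \<kappa> x0 P0 b0 *\<^sub>R x0"
    using LIMSEQ_unique by blast
  then show ?thesis
    unfolding oval_def using x0 x0_P0 by blast
qed

theorem lemma3p7:
  fixes D :: "'a::euclidean_space set"
    and \<kappa> :: real
    and P :: "nat \<Rightarrow> 'a" and b :: "nat \<Rightarrow> real" and z :: "nat \<Rightarrow> 'a"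
    and P0 z0 :: 'a and b0 :: real
  assumes "compact (closure D)" and "0 \<notin> closure D"
    and "\<kappa> < -1"
    and "\<And>k. P k \<in> closure D" and "P0 \<in> closure D"
    and "\<And>k. \<kappa> * norm (P k) < b k \<and> b k < norm (P k)"
    and "\<kappa> * norm P0 < b0" and "b0 < norm P0"
    and "P \<longlonglongrightarrow> P0" and "b \<longlonglongrightarrow> b0"
    and "\<And>k. z k \<in> oval \<kappa> (P k) (b k)"
    and "z \<longlonglongrightarrow> z0"
  shows "z0 \<in> oval \<kappa> P0 b0
         \<and> (\<lambda>k. oval_normal \<kappa> (P k) (z k)) \<longlonglongrightarrow> oval_normal \<kappa> P0 z0"
proof -
  have "P0 \<noteq> 0"
    using assms(2,5) by auto
  moreover have "\<kappa>\<^sup>2 \<noteq> 1" "\<kappa> \<noteq> 0"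
    using square_gt_one_if_less_minus_one[OF assms(3)] by auto
  ultimately have z0: "z0 \<in> oval \<kappa> P0 b0"
    using oval_limit assms(9-12) by metis
  then have "norm z0 + \<kappa> * norm (z0 - P0) = b0"
    using oval_focal_property assms(3,7,8) by blast
  then have "z0 \<noteq> 0" and "P0 - z0 \<noteq> 0"
    using assms(7,8) by (auto simp: norm_minus_commute)
  then have "(\<lambda>k. oval_normal \<kappa> (P k) (z k)) \<longlonglongrightarrow> oval_normal \<kappa> P0 z0"
    unfolding oval_normal_def by (intro tendsto_intros assms(9,12)) auto
  with z0 show ?thesis
    by simp
qed

end
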